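(* Let $n\ge4$ be even. The set of words $\tau\in\mathcal{A}_n^{\mathbb{N}}$ that are not injective is $\nu_n$-null.
   Context: Let $\mathcal{A}_n=\{1,\dots,5n-6\}$, $\mathcal{A}_n^m$ words of length $m$, $\mathcal{A}_n^*$ all finite words, $\mathcal{A}_n^{\mathbb{N}}$ infinite words; for a word $\tau$, $\tau(m)$ is its prefix of length $m$. $\nu_n$ is the probability measure on $\mathcal{A}_n^{\mathbb{N}}$ (on the $\sigma$-algebra generated by cylinders) with $\nu_n(\{\tau:\tau(|w|)=w\})=(5n-6)^{-|w|}$ for all $w\in\mathcal{A}_n^*$. Define maps $\psi^1_{n,j},\psi^2_{n,j}:\mathbb{R}^2\to\mathbb{R}^2$, $j\in\mathcal{A}_n$, each of the form $x\mapsto\frac1nx+b$: for $j=1,\dots,4n-4$, $\psi^1_{n,j}=\psi^2_{n,j}$ map $[0,1]^2$ onto the $4n-4$ squares of the grid of $n^2$ closed squares of side $1/n$ in $[0,1]^2$ meeting $\partial[0,1]^2$; for $j=4n-3+i$, $i=0,\dots,\frac n2-2$, $\psi^1_{n,j}(x)=\psi^2_{n,j}(x)=\frac1nx+(\frac12+\frac in,\frac1n)$; for $j=4n+\frac n2-4+i$, $i=0,\dots,\frac n2-2$, $\psi^1_{n,j}(x)=\frac1nx+(\frac{i+1}n,\frac2n)$, $\psi^2_{n,j}(x)=\frac1nx+(\frac{i+1}n,\frac1n)$. A choice function is any $\eta:\mathcal{A}_n^*\to\{1,2\}$; $\phi^\eta_\varepsilon=\mathrm{id}$, $\phi^\eta_w=\psi^{\eta(\varepsilon)}_{n,i_1}\circ\psi^{\eta(i_1)}_{n,i_2}\circ\cdots\circ\psi^{\eta(i_1\cdots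 i_{m-1})}_{n,i_m}$ for $w=i_1\cdots i_m$; $K^\eta=\bigcap_{m\ge0}\bigcup_{w\in\mathcal{A}_n^m}\phi^\eta_w([0,1]^2)$; $\pi_\eta:\mathcal{A}_n^{\mathbb{N}}\to K^\eta$, $\pi_\eta(\tau)=\lim_{m\to\infty}\phi^\eta_{\tau(m)}(\mathbf{0})$. A word $\tau$ is injective if for every choice function $\eta$, $\pi_\eta^{-1}(\{\pi_\eta(\tau)\})=\{\tau\}$. *)

theory Defs
  imports "HOL-Probability.Probability"
begin

definition alphabet :: "nat \<Rightarrow> nat set" where
  "alphabet n = {1..5*n-6}"

text \<open>Lower-left corners (a,b) (in units of 1/n) of the 4n-4 grid squares meeting the
  boundary of the unit square, in a fixed enumeration.\<close>
definition boundary_corners :: "nat \<Rightarrow> (nat \<times> nat) list" where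
  "boundary_corners n = filter (\<lambda>(a,b). a = 0 \<or> a = n - 1 \<or> b = 0 \<or> b = n - 1)
      [(a,b). a \<leftarrow> [0..<n], b \<leftarrow> [0..<n]]"

definition psi_trans :: "nat \<Rightarrow> nat \<Rightarrow> nat \<Rightarrow> real \<times> real" where
  "psi_trans n k j =
     (if 1 \<le> j \<and> j \<le> 4*n-4 then
        (let (a,b) = boundary_corners n ! (j - 1) in (real a / real n, real b / real n))
      else if 4*n-3 \<le> j \<and> j \<le> 4*n-3 + (n div 2 - 2) then
        (let i = j - (4*n-3) in (1/2 + real i / real n, 1 / real n))
      else if 4*n + n div 2 - 4 \<le> j \<and> j \<le> 4*n + n div 2 - 4 + (n div 2 - 2) then
        (let i = j - (4*n + n div 2 - 4) in
           if k = 1 then (real (i+1) / real n, 2 / real n)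
           else (real (i+1) / real n, 1 / real n))
      else (0, 0))"

definition psi :: "nat \<Rightarrow> nat \<Rightarrow> nat \<Rightarrow> real \<times> real \<Rightarrow> real \<times> real" where
  "psi n k j x = (1 / real n) *\<^sub>R x + psi_trans n k j"

text \<open>phi^eta_w, where pre is the already read prefix.\<close>
fun phi_aux :: "nat \<Rightarrow> (nat list \<Rightarrow> nat) \<Rightarrow> nat list \<Rightarrow> nat list \<Rightarrow> real \<times> real \<Rightarrow> real \<times> real" where
  "phi_aux n \<eta> pre [] = id"
| "phi_aux n \<eta> pre (i # w) = psi n (\<eta> pre) i \<circ> phi_aux n \<eta> (pre @ [i]) w"

definition phi :: "nat \<Rightarrow> (nat list \<Rightarrow> nat) \<Rightarrow> nat list \<Rightarrow> real \<times> real \<Rightarrow> real \<times> real" where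
  "phi n \<eta> w = phi_aux n \<eta> [] w"

definition choice_fun :: "(nat list \<Rightarrow> nat) \<Rightarrow> bool" where
  "choice_fun \<eta> \<longleftrightarrow> (\<forall>w. \<eta> w \<in> {1,2})"

definition prefix_word :: "(nat \<Rightarrow> nat) \<Rightarrow> nat \<Rightarrow> nat list" where
  "prefix_word \<tau> m = map \<tau> [0..<m]"

definition coding_map :: "nat \<Rightarrow> (nat list \<Rightarrow> nat) \<Rightarrow> (nat \<Rightarrow> nat) \<Rightarrow> real \<times> real" where
  "coding_map n \<eta> \<tau> = lim (\<lambda>m. phi n \<eta> (prefix_word \<tau> m) (0, 0))"

definition words :: "nat \<Rightarrow> (nat \<Rightarrow> nat) set" where
  "words n = {\<tau>. \<forall>k. \<tau> k \<in> alphabet n}"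

definition nu :: "nat \<Rightarrow> (nat \<Rightarrow> nat) measure" where
  "nu n = PiM UNIV (\<lambda>_. uniform_count_measure (alphabet n))"

definition injective_word :: "nat \<Rightarrow> (nat \<Rightarrow> nat) \<Rightarrow> bool" where
  "injective_word n \<tau> \<longleftrightarrow>
     (\<forall>\<eta>. choice_fun \<eta> \<longrightarrow>
        {\<sigma> \<in> words n. coding_map n \<eta> \<sigma> = coding_map n \<eta> \<tau>} = {\<tau>})"

end

theory Submission
  imports Defs
begin

text \<open>All translation parts of the maps \<open>\<psi>\<close> are lattice points (a/n, b/n) with a, b < n, so both
  coordinates of \<open>\<pi>\<^sub>\<eta>(\<tau>)\<close> come with base-n expansions whose digits are read off from \<open>\<tau>\<close>, and
  for a fixed choice of the maps distinct letters give distinct digit pairs. If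
  \<open>\<pi>\<^sub>\<eta>(\<sigma>) = \<pi>\<^sub>\<eta>(\<tau>)\<close> with \<open>\<sigma> \<noteq> \<tau>\<close>, then at the first letter where the words differ some
  coordinate has different digits, and equality of the two expansions forces all later digits of
  \<open>\<tau>\<close> in that coordinate to be 0 or n - 1. The letter 4n - 3 has digit pair (n/2, 1), extremal in
  neither coordinate, so \<open>\<tau>\<close> eventually avoids it, which has probability zero under \<open>\<nu>\<^sub>n\<close>.\<close>

section \<open>Base-b expansions\<close>

definition base_expansion :: "nat \<Rightarrow> (nat \<Rightarrow> nat) \<Rightarrow> real" where
  "base_expansion b d = (\<Sum>i. real (d i) / real b ^ Suc i)"

context
  fixes b :: nat
  assumes b: "2 \<le> b"
begin

lemma summable_base_expansion:
  assumes "\<And>i. d i < b"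
  shows "summable (\<lambda>i. real (d i) / real b ^ Suc i)"
proof (rule summable_comparison_test)
  show "summable (\<lambda>i. (1 / real b) ^ i)"
    using b by (intro summable_geometric) auto
  have "real (d i) / real b ^ Suc i \<le> real b / real b ^ Suc i" for i
    using assms[of i] by (intro divide_right_mono) auto
  then show "\<exists>N. \<forall>i\<ge>N. norm (real (d i) / real b ^ Suc i) \<le> (1 / real b) ^ i"
    using b by (auto simp: power_divide)
qed

lemma base_expansion_Suc:
  assumes "\<And>i. d i < b"
  shows "base_expansion b d = (real (d 0) + base_expansion b (\<lambda>i. d (Suc i))) / real b"
proof -
  have "summable (\<lambda>i. real (d (Suc i)) / real b ^ Suc i)"
    using assms by (intro summable_base_expansion)
  then have "(\<Sum>i. real (d (Suc i)) / real b ^ Suc (Suc i)) = base_expansion b (\<lambda>i. d (Suc i)) / real b"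
    unfolding base_expansion_def by (subst suminf_divide[symmetric]) (auto simp: field_simps)
  moreover have "(\<Sum>i. real (d (Suc i)) / real b ^ Suc (Suc i)) = base_expansion b d - real (d 0) / real b"
    unfolding base_expansion_def using suminf_split_head[OF summable_base_expansion[OF assms]] by simp
  ultimately show ?thesis
    using b by (simp add: field_simps)
qed

lemma base_expansion_bounds:
  assumes "\<And>i. d i < b"
  shows "0 \<le> base_expansion b d" "base_expansion b d \<le> 1"
proof -
  show "0 \<le> base_expansion b d"
    unfolding base_expansion_def by (intro suminf_nonneg summable_base_expansion assms) auto
  have "(\<lambda>i. (real b - 1) / real b * (1 / real b) ^ i) sums ((real b - 1) / real b * (1 / (1 - 1 / real b)))"
    using b by (intro sums_mult geometric_sums) auto
  moreover have "(real b - 1) / real b * (1 / (1 - 1 / real b)) = 1"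
    using b by (simp add: field_simps)
  ultimately have geometric: "(\<lambda>i. (real b - 1) / real b * (1 / real b) ^ i) sums 1"
    by metis
  have "real (d i) / real b ^ Suc i \<le> (real b - 1) / real b * (1 / real b) ^ i" for i
  proof -
    have "real (d i) \<le> real b - 1"
      using assms[of i] by linarith
    then show ?thesis
      by (simp add: power_divide divide_right_mono)
  qed
  then show "base_expansion b d \<le> 1"
    unfolding base_expansion_def
    by (rule sums_le[OF _ summable_sums geometric]) (use assms summable_base_expansion in auto)
qed

lemma base_expansion_extremal_Suc:
  assumes "\<And>i. d i < b" "base_expansion b d \<in> {0, 1}"
  shows "d 0 \<in> {0, b - 1}" "base_expansion b (\<lambda>i. d (Suc i)) \<in> {0, 1}"
proof -
  have step: "base_expansion b d * real b = real (d 0) + base_expansion b (\<lambda>i. d (Suc i))"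
    using base_expansion_Suc[OF assms(1)] b by (simp add: field_simps)
  have tail: "0 \<le> base_expansion b (\<lambda>i. d (Suc i))" "base_expansion b (\<lambda>i. d (Suc i)) \<le> 1"
    using assms(1) by (auto intro!: base_expansion_bounds)
  have "real (d 0) \<le> real b - 1"
    using assms(1)[of 0] by linarith
  with assms(2) step tail have "d 0 = 0 \<and> base_expansion b (\<lambda>i. d (Suc i)) = 0
      \<or> real (d 0) = real b - 1 \<and> base_expansion b (\<lambda>i. d (Suc i)) = 1"
    by auto
  then show "d 0 \<in> {0, b - 1}" "base_expansion b (\<lambda>i. d (Suc i)) \<in> {0, 1}"
    using b by (auto simp: of_nat_diff)
qed

lemma base_expansion_extremal_imp_digits_extremal:
  assumes "\<And>i. d i < b" "base_expansion b d \<in> {0, 1}"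
  shows "d i \<in> {0, b - 1}"
  using assms
proof (induction i arbitrary: d)
  case 0
  then show ?case by (rule base_expansion_extremal_Suc)
next
  case (Suc i)
  then show ?case
    using Suc.IH[of "\<lambda>i. d (Suc i)"] base_expansion_extremal_Suc(2) by blast
qed

text \<open>Both tails lie in [0, 1], so leading digits that differ by at least 1 force them to be 1 and 0.\<close>

lemma base_expansion_eq_first_digit_differs:
  assumes "\<And>i. d i < b" "\<And>i. d' i < b"
    and "base_expansion b d = base_expansion b d'" "d 0 \<noteq> d' 0"
  shows "base_expansion b (\<lambda>i. d (Suc i)) \<in> {0, 1}"
proof -
  have "real (d 0) + base_expansion b (\<lambda>i. d (Suc i)) = real (d' 0) + base_expansion b (\<lambda>i. d' (Suc i))"
    using base_expansion_Suc[of d] base_expansion_Suc[of d'] assms b by (simp add: field_simps)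
  moreover have "0 \<le> base_expansion b (\<lambda>i. d (Suc i))" "base_expansion b (\<lambda>i. d (Suc i)) \<le> 1"
    "0 \<le> base_expansion b (\<lambda>i. d' (Suc i))" "base_expansion b (\<lambda>i. d' (Suc i)) \<le> 1"
    using assms(1,2) by (auto intro!: base_expansion_bounds)
  moreover have "real (d 0) + 1 \<le> real (d' 0) \<or> real (d' 0) + 1 \<le> real (d 0)"
    using assms(4) by linarith
  ultimately show ?thesis
    by auto
qed

lemma base_expansion_shift_eq:
  assumes "\<And>i. d i < b" "\<And>i. d' i < b"
    and "base_expansion b d = base_expansion b d'" "\<And>i. i < k \<Longrightarrow> d i = d' i"
  shows "base_expansion b (\<lambda>i. d (k + i)) = base_expansion b (\<lambda>i. d' (k + i))"
  using assms(4)
proof (induction k)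
  case 0
  then show ?case using assms(3) by simp
next
  case (Suc k)
  then show ?case
    using base_expansion_Suc[of "\<lambda>i. d (k + i)"] base_expansion_Suc[of "\<lambda>i. d' (k + i)"] assms(1,2) b
    by (simp add: field_simps)
qed

lemma base_expansion_eq_imp_extremal_tail:
  assumes "\<And>i. d i < b" "\<And>i. d' i < b"
    and "base_expansion b d = base_expansion b d'"
    and "\<And>i. i < k \<Longrightarrow> d i = d' i" "d k \<noteq> d' k" "k < i"
  shows "d i \<in> {0, b - 1}"
proof -
  have "base_expansion b (\<lambda>i. d (k + i)) = base_expansion b (\<lambda>i. d' (k + i))"
    using assms(1-4) by (rule base_expansion_shift_eq)
  then have "base_expansion b (\<lambda>i. d (Suc k + i)) \<in> {0, 1}"
    using base_expansion_eq_first_digit_differs[of "\<lambda>i. d (k + i)" "\<lambda>i. d' (k + i)"] assms by simp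
  then have "d (Suc k + (i - Suc k)) \<in> {0, b - 1}"
    using assms(1) by (intro base_expansion_extremal_imp_digits_extremal[of "\<lambda>i. d (Suc k + i)"])
  then show ?thesis
    using assms(6) by simp
qed

end

section \<open>Tails of infinite product measures\<close>

lemma null_sets_PiM_eventually_in:
  fixes M :: "'a measure" and K :: nat
  assumes M: "prob_space M" and B: "B \<in> sets M" "measure M B < 1"
  shows "{\<omega> \<in> space (PiM UNIV (\<lambda>_. M)). \<forall>m\<ge>K. \<omega> m \<in> B} \<in> null_sets (PiM UNIV (\<lambda>_. M))"
    (is "?S \<in> null_sets ?P")
proof -
  interpret M: prob_space M
    by (rule M)
  interpret P: prob_space ?P
    by (rule prob_space_PiM) (simp add: M)
  define C where "C N = prod_emb UNIV (\<lambda>_. M) {K..<K+N} (PiE {K..<K+N} (\<lambda>_. B))" for N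
  have C_sets: "C N \<in> sets ?P" for N
    unfolding C_def by (rule sets_PiM_I) (use B in auto)
  have prob_C: "P.prob (C N) = measure M B ^ N" for N
  proof -
    have "emeasure ?P (C N) = (\<Prod>i\<in>{K..<K+N}. emeasure M B)"
      unfolding C_def by (rule emeasure_PiM_emb) (use M B in auto)
    also have "\<dots> = ennreal (measure M B ^ N)"
      by (simp add: M.emeasure_eq_measure ennreal_power)
    finally show ?thesis
      by (simp add: P.emeasure_eq_measure)
  qed
  have S_sets: "?S \<in> sets ?P"
    using B by measurable
  have "P.prob ?S \<le> measure M B ^ N" for N
  proof -
    have "?S \<subseteq> C N"
      unfolding C_def prod_emb_def by (auto simp: restrict_PiE_iff space_PiM intro: PiE_mem)
    then have "P.prob ?S \<le> P.prob (C N)"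
      using C_sets by (rule P.finite_measure_mono)
    then show ?thesis
      by (simp add: prob_C)
  qed
  moreover have "(\<lambda>N. measure M B ^ N) \<longlonglongrightarrow> 0"
    using B by (intro LIMSEQ_power_zero) auto
  ultimately have "P.prob ?S \<le> 0"
    by (intro LIMSEQ_le_const) auto
  then have "emeasure ?P ?S = 0"
    using P.emeasure_eq_measure measure_nonneg[of ?P ?S] by simp
  then show ?thesis
    using S_sets by (rule null_setsI)
qed

lemma null_sets_nu_eventually_avoiding:
  assumes "a \<in> alphabet n"
  shows "{\<tau> \<in> words n. \<forall>m\<ge>K. \<tau> m \<noteq> a} \<in> null_sets (nu n)"
proof -
  have finite: "finite (alphabet n)"
    by (simp add: alphabet_def)
  then have "0 < card (alphabet n)"
    using assms card_gt_0_iff by blast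
  then have "measure (uniform_count_measure (alphabet n)) (alphabet n - {a}) < 1"
    using assms finite by (simp add: measure_uniform_count_measure card_Diff_singleton divide_less_eq)
  then have "{\<tau> \<in> space (nu n). \<forall>m\<ge>K. \<tau> m \<in> alphabet n - {a}} \<in> null_sets (nu n)"
    unfolding nu_def using assms finite
    by (intro null_sets_PiM_eventually_in prob_space_uniform_count_measure)
      (auto simp: sets_uniform_count_measure)
  moreover have "space (nu n) = words n"
    unfolding nu_def words_def space_PiM space_uniform_count_measure by (auto simp: PiE_def)
  then have "{\<tau> \<in> space (nu n). \<forall>m\<ge>K. \<tau> m \<in> alphabet n - {a}} = {\<tau> \<in> words n. \<forall>m\<ge>K. \<tau> m \<noteq> a}"
    by (auto simp: words_def)
  ultimately show ?thesis
    by simp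
qed

section \<open>Digits of the maps \<open>\<psi>\<close>\<close>

definition psi_digits :: "nat \<Rightarrow> nat \<Rightarrow> nat \<Rightarrow> nat \<times> nat" where
  "psi_digits n k j =
     (if 1 \<le> j \<and> j \<le> 4*n-4 then boundary_corners n ! (j - 1)
      else if 4*n-3 \<le> j \<and> j \<le> 4*n-3 + (n div 2 - 2) then
        (n div 2 + (j - (4*n-3)), 1)
      else if 4*n + n div 2 - 4 \<le> j \<and> j \<le> 4*n + n div 2 - 4 + (n div 2 - 2) then
        (j - (4*n + n div 2 - 4) + 1, if k = 1 then 2 else 1)
      else (0, 0))"

lemma psi_trans_eq_psi_digits:
  assumes "even n" "0 < n"
  shows "psi_trans n k j = (real (fst (psi_digits n k j)) / real n, real (snd (psi_digits n k j)) / real n)"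
proof -
  have "1/2 + real i / real n = real (n div 2 + i) / real n" for i
    using assms by (auto simp: field_simps real_of_nat_div)
  then show ?thesis
    unfolding psi_trans_def psi_digits_def by (auto simp: Let_def split: prod.splits)
qed

lemma set_boundary_corners:
  "set (boundary_corners n) = {(a, b). a < n \<and> b < n \<and> (a = 0 \<or> a = n - 1 \<or> b = 0 \<or> b = n - 1)}"
  unfolding boundary_corners_def by (auto simp: product_concat_map[symmetric])

lemma distinct_boundary_corners: "distinct (boundary_corners n)"
  unfolding boundary_corners_def by (simp add: product_concat_map[symmetric] distinct_product)

lemma length_boundary_corners:
  assumes "n \<ge> 2"
  shows "length (boundary_corners n) = 4*n - 4"
proof -
  have "length (boundary_corners n) = card (set (boundary_corners n))"
    by (simp add: distinct_boundary_corners distinct_card)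
  also have "set (boundary_corners n) = {..<n} \<times> {..<n} - {1..n-2} \<times> {1..n-2}"
    using assms by (auto simp: set_boundary_corners)
  also have "card \<dots> = n*n - (n-2)*(n-2)"
    by (subst card_Diff_subset) (use assms in auto)
  also have "\<dots> = 4*n - 4"
    using assms by (induction n rule: nat_induct_at_least) (auto simp: algebra_simps)
  finally show ?thesis .
qed

lemma psi_digits_less:
  assumes "4 \<le> n" "even n"
  shows "fst (psi_digits n k j) < n" "snd (psi_digits n k j) < n"
proof -
  have "boundary_corners n ! (j - 1) \<in> set (boundary_corners n)" if "1 \<le> j" "j \<le> 4*n-4"
    using that assms length_boundary_corners[of n] by (intro nth_mem) auto
  then show "fst (psi_digits n k j) < n" "snd (psi_digits n k j) < n"
    using assms unfolding psi_digits_def set_boundary_corners by auto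
qed

lemma alphabet_eq_blocks:
  assumes "4 \<le> n"
  shows "alphabet n = {1..4*n-4} \<union> ({4*n-3..4*n + n div 2 - 5} \<union> {4*n + n div 2 - 4..5*n-6})"
proof -
  have "2 \<le> n div 2" "n div 2 \<le> n"
    using assms by auto
  then show ?thesis
    unfolding alphabet_def using assms by (intro set_eqI) (simp, linarith)
qed

lemma psi_digits_boundary_block:
  assumes "j \<in> {1..4*n-4}"
  shows "psi_digits n k j = boundary_corners n ! (j - 1)"
  using assms by (simp add: psi_digits_def)

lemma psi_digits_fixed_block:
  assumes "4 \<le> n" "j \<in> {4*n-3..4*n + n div 2 - 5}"
  shows "psi_digits n k j = (n div 2 + (j - (4*n-3)), 1)"
proof -
  have "2 \<le> n div 2"
    using assms(1) by auto
  then have "\<not> j \<le> 4*n-4" "4*n-3 \<le> j \<and> j \<le> 4*n-3 + (n div 2 - 2)"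
    using assms by auto
  then show ?thesis
    by (simp add: psi_digits_def)
qed

lemma psi_digits_switching_block:
  assumes "4 \<le> n" "even n" "j \<in> {4*n + n div 2 - 4..5*n-6}"
  shows "psi_digits n k j = (j - (4*n + n div 2 - 4) + 1, if k = 1 then 2 else 1)"
proof -
  have "2 \<le> n div 2" "n div 2 + n div 2 = n"
    using assms(1,2) by auto
  then have "\<not> j \<le> 4*n-4" "\<not> j \<le> 4*n-3 + (n div 2 - 2)"
      "4*n + n div 2 - 4 \<le> j \<and> j \<le> 4*n + n div 2 - 4 + (n div 2 - 2)"
    using assms by auto
  then show ?thesis
    by (simp add: psi_digits_def)
qed

lemma inj_on_psi_digits_boundary_block:
  assumes "2 \<le> n"
  shows "inj_on (psi_digits n k) {1..4*n-4}"
proof (rule inj_onI)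
  fix x y assume x: "x \<in> {1..4*n-4}" and y: "y \<in> {1..4*n-4}"
    and "psi_digits n k x = psi_digits n k y"
  then have "boundary_corners n ! (x - 1) = boundary_corners n ! (y - 1)"
    by (simp add: psi_digits_boundary_block)
  moreover have "x - 1 < length (boundary_corners n)" "y - 1 < length (boundary_corners n)"
    using x y length_boundary_corners[OF assms] by auto
  ultimately have "x - 1 = y - 1"
    using distinct_boundary_corners nth_eq_iff_index_eq by blast
  then show "x = y"
    using x y by (simp, arith)
qed

lemma inj_on_psi_digits:
  assumes "4 \<le> n" "even n"
  shows "inj_on (psi_digits n k) (alphabet n)"
proof -
  define B1 B2 B3 where "B1 = {1..4*n-4}"
    and "B2 = {4*n-3..4*n + n div 2 - 5}" and "B3 = {4*n + n div 2 - 4..5*n-6}"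
  note on_B1 = psi_digits_boundary_block[of _ n, folded B1_def]
  note on_B2 = psi_digits_fixed_block[OF assms(1), folded B2_def]
  note on_B3 = psi_digits_switching_block[OF assms, folded B3_def]
  have half: "2 \<le> n div 2" "n div 2 + n div 2 = n"
    using assms by auto
  have "inj_on (psi_digits n k) B1"
    unfolding B1_def using assms(1) by (intro inj_on_psi_digits_boundary_block) simp
  moreover have "inj_on (psi_digits n k) B2"
    by (rule inj_onI) (simp add: on_B2 B2_def, arith)
  moreover have "inj_on (psi_digits n k) B3"
    by (rule inj_onI) (simp add: on_B3 B3_def, arith)
  moreover have "psi_digits n k ` B2 \<inter> psi_digits n k ` B3 = {}"
  proof -
    have "n div 2 \<le> fst (psi_digits n k j)" if "j \<in> B2" for j
      using that by (simp add: on_B2)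
    moreover have "fst (psi_digits n k j) < n div 2" if "j \<in> B3" for j
      using that half by (simp add: on_B3 B3_def, linarith)
    ultimately show ?thesis
      by (fastforce simp: not_le[symmetric])
  qed
  moreover have "psi_digits n k ` B1 \<subseteq> set (boundary_corners n)"
    using length_boundary_corners[of n] assms by (auto simp: on_B1 B1_def)
  moreover have "psi_digits n k ` (B2 \<union> B3) \<inter> set (boundary_corners n) = {}"
  proof -
    have "psi_digits n k j \<in> {1..n-2} \<times> {1..2}" if "j \<in> B2 \<union> B3" for j
      using that half by (elim UnE) (simp_all add: on_B2 on_B3 B2_def B3_def, linarith+)
    then show ?thesis
      using assms by (fastforce simp: set_boundary_corners)
  qed
  ultimately show ?thesis
    unfolding alphabet_eq_blocks[OF assms(1)] B1_def[symmetric] B2_def[symmetric] B3_def[symmetric]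
      inj_on_Un by blast
qed

lemma psi_digits_interior_letter:
  assumes "4 \<le> n"
  shows "psi_digits n k (4*n-3) = (n div 2, 1)"
  using assms unfolding psi_digits_def by auto

section \<open>The coding map in base n\<close>

lemma phi_aux_affine:
  "phi_aux n \<eta> pre w x = (1 / real n) ^ length w *\<^sub>R x + phi_aux n \<eta> pre w (0, 0)"
proof (induction w arbitrary: pre x)
  case Nil
  then show ?case by (simp add: zero_prod_def)
next
  case (Cons i w)
  show ?case
    using Cons[of "pre @ [i]" x] by (simp add: psi_def algebra_simps)
qed

lemma phi_aux_snoc:
  "phi_aux n \<eta> pre (w @ [a]) = phi_aux n \<eta> pre w \<circ> psi n (\<eta> (pre @ w)) a"
  by (induction w arbitrary: pre) auto

lemma prefix_word_Suc: "prefix_word \<tau> (Suc m) = prefix_word \<tau> m @ [\<tau> m]"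
  unfolding prefix_word_def by simp

definition word_digits :: "nat \<Rightarrow> (nat list \<Rightarrow> nat) \<Rightarrow> (nat \<Rightarrow> nat) \<Rightarrow> nat \<Rightarrow> nat \<times> nat" where
  "word_digits n \<eta> \<tau> i = psi_digits n (\<eta> (prefix_word \<tau> i)) (\<tau> i)"

lemma phi_prefix_word:
  assumes "even n" "0 < n"
  shows "phi n \<eta> (prefix_word \<tau> m) (0, 0) =
    ((\<Sum>i<m. real (fst (word_digits n \<eta> \<tau> i)) / real n ^ Suc i),
     (\<Sum>i<m. real (snd (word_digits n \<eta> \<tau> i)) / real n ^ Suc i))"
proof (induction m)
  case 0
  then show ?case by (simp add: phi_def prefix_word_def)
next
  case (Suc m)
  have "phi n \<eta> (prefix_word \<tau> (Suc m)) (0, 0)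
      = phi n \<eta> (prefix_word \<tau> m) (psi n (\<eta> (prefix_word \<tau> m)) (\<tau> m) (0, 0))"
    unfolding phi_def prefix_word_Suc phi_aux_snoc by simp
  also have "\<dots> = (1 / real n) ^ m *\<^sub>R psi_trans n (\<eta> (prefix_word \<tau> m)) (\<tau> m)
      + phi n \<eta> (prefix_word \<tau> m) (0, 0)"
    unfolding phi_def by (subst phi_aux_affine) (simp add: psi_def prefix_word_def zero_prod_def)
  finally show ?case
    using Suc assms
    by (simp add: psi_trans_eq_psi_digits word_digits_def power_divide field_simps)
qed

lemma coding_map_eq_base_expansion:
  assumes "4 \<le> n" "even n"
  shows "coding_map n \<eta> \<tau> =
    (base_expansion n (\<lambda>i. fst (word_digits n \<eta> \<tau> i)),
     base_expansion n (\<lambda>i. snd (word_digits n \<eta> \<tau> i)))"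
proof -
  have "summable (\<lambda>i. real (fst (word_digits n \<eta> \<tau> i)) / real n ^ Suc i)"
    "summable (\<lambda>i. real (snd (word_digits n \<eta> \<tau> i)) / real n ^ Suc i)"
    by (intro summable_base_expansion; use assms in \<open>simp add: word_digits_def psi_digits_less\<close>)+
  then have "(\<lambda>m. phi n \<eta> (prefix_word \<tau> m) (0, 0)) \<longlonglongrightarrow>
    (base_expansion n (\<lambda>i. fst (word_digits n \<eta> \<tau> i)),
     base_expansion n (\<lambda>i. snd (word_digits n \<eta> \<tau> i)))"
    using assms by (simp add: phi_prefix_word base_expansion_def tendsto_Pair summable_LIMSEQ)
  then show ?thesis
    unfolding coding_map_def by (rule limI)
qed

lemma coding_map_eq_imp_extremal_digit:
  assumes n: "4 \<le> n" "even n" and words: "\<sigma> \<in> words n" "\<tau> \<in> words n"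
    and same_point: "coding_map n \<eta> \<sigma> = coding_map n \<eta> \<tau>"
    and agree: "\<And>i. i < k \<Longrightarrow> \<sigma> i = \<tau> i" and differ: "\<sigma> k \<noteq> \<tau> k" and "k < m"
  shows "fst (word_digits n \<eta> \<tau> m) \<in> {0, n - 1} \<or> snd (word_digits n \<eta> \<tau> m) \<in> {0, n - 1}"
proof -
  have same_prefix: "prefix_word \<sigma> i = prefix_word \<tau> i" if "i \<le> k" for i
    using agree that by (auto simp: prefix_word_def)
  have digit_less: "c (word_digits n \<eta> \<rho> i) < n"
    if "c = fst \<or> c = snd" for c :: "nat \<times> nat \<Rightarrow> nat" and \<rho> i
    using that psi_digits_less[OF n] by (auto simp: word_digits_def)
  have extremal: "c (word_digits n \<eta> \<tau> m) \<in> {0, n - 1}"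
    if c: "c = fst \<or> c = snd" "c (word_digits n \<eta> \<tau> k) \<noteq> c (word_digits n \<eta> \<sigma> k)"
    for c :: "nat \<times> nat \<Rightarrow> nat"
  proof (rule base_expansion_eq_imp_extremal_tail[where k = k
        and d = "\<lambda>i. c (word_digits n \<eta> \<tau> i)" and d' = "\<lambda>i. c (word_digits n \<eta> \<sigma> i)"])
    show "base_expansion n (\<lambda>i. c (word_digits n \<eta> \<tau> i)) = base_expansion n (\<lambda>i. c (word_digits n \<eta> \<sigma> i))"
      using same_point c(1) coding_map_eq_base_expansion[OF n] by auto
    show "c (word_digits n \<eta> \<tau> i) = c (word_digits n \<eta> \<sigma> i)" if "i < k" for i
      using agree[OF that] same_prefix[of i] that by (simp add: word_digits_def)
  qed (use n c(2) digit_less[OF c(1)] \<open>k < m\<close> in auto)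
  have "psi_digits n (\<eta> (prefix_word \<tau> k)) (\<tau> k) \<noteq> psi_digits n (\<eta> (prefix_word \<tau> k)) (\<sigma> k)"
    using differ words by (intro inj_on_contraD[OF inj_on_psi_digits[OF n]]) (auto simp: words_def)
  then have "fst (word_digits n \<eta> \<tau> k) \<noteq> fst (word_digits n \<eta> \<sigma> k) \<or>
      snd (word_digits n \<eta> \<tau> k) \<noteq> snd (word_digits n \<eta> \<sigma> k)"
    using same_prefix[of k] by (simp add: word_digits_def prod_eq_iff)
  then show ?thesis
    using extremal[of fst] extremal[of snd] by blast
qed

lemma non_injective_word_eventually_avoids_interior_letter:
  assumes n: "4 \<le> n" "even n" and \<tau>: "\<tau> \<in> words n" and "\<not> injective_word n \<tau>"
  shows "\<exists>K. \<forall>m\<ge>K. \<tau> m \<noteq> 4*n - 3"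
proof -
  obtain \<eta> \<sigma> where \<sigma>: "\<sigma> \<in> words n" "\<sigma> \<noteq> \<tau>"
    and same_point: "coding_map n \<eta> \<sigma> = coding_map n \<eta> \<tau>"
    using assms(4) \<tau> unfolding injective_word_def by blast
  define k where "k = (LEAST k. \<sigma> k \<noteq> \<tau> k)"
  have "\<exists>k. \<sigma> k \<noteq> \<tau> k"
    using \<sigma>(2) by auto
  then have differ: "\<sigma> k \<noteq> \<tau> k"
    unfolding k_def by (rule LeastI_ex)
  have agree: "\<sigma> i = \<tau> i" if "i < k" for i
    using not_less_Least that unfolding k_def by blast
  have "\<tau> m \<noteq> 4*n - 3" if "k < m" for m
  proof
    assume "\<tau> m = 4*n - 3"
    then have "word_digits n \<eta> \<tau> m = (n div 2, 1)"
      using n(1) by (simp add: word_digits_def psi_digits_interior_letter)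
    then show False
      using coding_map_eq_imp_extremal_digit[OF n \<sigma>(1) \<tau> same_point agree differ that] n by auto
  qed
  then show ?thesis
    by (auto intro!: exI[of _ "Suc k"])
qed

theorem lemma5p3:
  fixes n :: nat
  assumes "n \<ge> 4" and "even n"
  shows "{\<tau> \<in> words n. \<not> injective_word n \<tau>} \<in> null_sets (completion (nu n))"
proof -
  have "{\<tau> \<in> words n. \<not> injective_word n \<tau>} \<subseteq> (\<Union>K. {\<tau> \<in> words n. \<forall>m\<ge>K. \<tau> m \<noteq> 4*n - 3})"
    using non_injective_word_eventually_avoids_interior_letter assms by blast
  moreover have "(\<Union>K. {\<tau> \<in> words n. \<forall>m\<ge>K. \<tau> m \<noteq> 4*n - 3}) \<in> null_sets (nu n)"
    using assms by (intro null_sets_UN null_sets_nu_eventually_avoiding) (auto simp: alphabet_def)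
  ultimately show ?thesis
    by (meson null_sets_completionI null_sets_completion_subset)
qed

end
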